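(* For every $x\in(0,\infty)$ and $k\in\mathbb{Z}$, $\mathcal{S}_k\big(a^{\rm st}(x),b^{\rm st}(x),m^{\rm st}(x),n^{\rm st}(x)\big)=\big(a^{\rm st}(s_k(x)),b^{\rm st}(s_k(x)),m^{\rm st}(s_k(x)),n^{\rm st}(s_k(x))\big)$.
   Context: ABMN system on $\mathbb{Z}$: $a_i,b_i\ge0$, $m_i,n_i\in\mathbb{R}$ with $(a_i+b_i)(m_i+a_i)=a_im_{i+1}+b_im_{i-1}$, $(a_i+b_i)(n_i+b_i)=a_in_{i+1}+b_in_{i-1}$, $(a_i+b_i)^2=b_i(m_{i+1}-m_{i-1})$, $(a_i+b_i)^2=a_i(n_{i-1}-n_{i+1})$ for all $i$; positive if all $a_i,b_i>0$. A positive solution is standard if $\lim_{i\to-\infty}m_i=0$, $\lim_{i\to\infty}n_i=0$, $\lim_{i\to\infty}m_i=1$; for $x>0$, $(a^{\rm st}(x),b^{\rm st}(x),m^{\rm st}(x),n^{\rm st}(x))$ is the unique standard solution with central ratio $\frac{n_{-1}-n_0}{m_0-m_{-1}}=x$. $\mathcal{S}_k$ is the left shift by $k$: $(\mathcal{S}_kq)_i=q_{i+k}$ applied to all four components. $s(x)=\frac{(\omega-1)^2}{4(\omega+7)}$, $\omega=\sqrt{8x+1}$; $s_0=\mathrm{id}$, $s_{-1}(x)=1/s(1/x)$, $s_i=s\circ s_{i-1}$, $s_{-i}=s_{-1}\circ s_{-(i-1)}$ for $i\in\mathbb{N}_+$. *)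

theory Defs
  imports Complex_Main
begin

type_synonym abmn = "(int \<Rightarrow> real) \<times> (int \<Rightarrow> real) \<times> (int \<Rightarrow> real) \<times> (int \<Rightarrow> real)"

definition abmn_system :: "abmn \<Rightarrow> bool" where
  "abmn_system q \<longleftrightarrow> (case q of (a, b, m, n) \<Rightarrow>
     (\<forall>i. a i \<ge> 0 \<and> b i \<ge> 0 \<and>
        (a i + b i) * (m i + a i) = a i * m (i + 1) + b i * m (i - 1) \<and>
        (a i + b i) * (n i + b i) = a i * n (i + 1) + b i * n (i - 1) \<and>
        (a i + b i)^2 = b i * (m (i + 1) - m (i - 1)) \<and>
        (a i + b i)^2 = a i * (n (i - 1) - n (i + 1))))"

definition abmn_positive :: "abmn \<Rightarrow> bool" where
  "abmn_positive q \<longleftrightarrow> abmn_system q \<and>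
     (case q of (a, b, m, n) \<Rightarrow> (\<forall>i. a i > 0 \<and> b i > 0))"

definition abmn_standard :: "abmn \<Rightarrow> bool" where
  "abmn_standard q \<longleftrightarrow> abmn_positive q \<and>
     (case q of (a, b, m, n) \<Rightarrow>
        (m \<longlongrightarrow> 0) at_bot \<and> (n \<longlongrightarrow> 0) at_top \<and> (m \<longlongrightarrow> 1) at_top)"

definition central_ratio :: "abmn \<Rightarrow> real" where
  "central_ratio q = (case q of (a, b, m, n) \<Rightarrow> (n (-1) - n 0) / (m 0 - m (-1)))"

text \<open>The unique standard solution with central ratio x (uniqueness is asserted in the paper).\<close>
definition abmn_st :: "real \<Rightarrow> abmn" where
  "abmn_st x = (THE q. abmn_standard q \<and> central_ratio q = x)"

definition shiftS :: "int \<Rightarrow> abmn \<Rightarrow> abmn" where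
  "shiftS k q = (case q of (a, b, m, n) \<Rightarrow>
     (\<lambda>i. a (i + k), \<lambda>i. b (i + k), \<lambda>i. m (i + k), \<lambda>i. n (i + k)))"

definition sfun :: "real \<Rightarrow> real" where
  "sfun x = (let \<omega> = sqrt (8 * x + 1) in (\<omega> - 1)^2 / (4 * (\<omega> + 7)))"

definition sfun_m1 :: "real \<Rightarrow> real" where
  "sfun_m1 x = 1 / sfun (1 / x)"

definition s_iter :: "int \<Rightarrow> real \<Rightarrow> real" where
  "s_iter k = (if k \<ge> 0 then sfun ^^ nat k else sfun_m1 ^^ nat (- k))"

end

theory Submission
  imports Defs
begin

text \<open>
  For a positive solution the four equations at index i are equivalent to
  m(i) - m(i-1) = a(i)^2/b(i), m(i+1) - m(i) = 2a(i) + b(i) and the mirror-image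
  identities for n. Hence, with p(k) = b(k)/a(k), the central ratio of the k-th
  shift is 2p(k)^2 + p(k), and the relation between consecutive indices reads
  2p(k+1)^2 + p(k+1) = s(2p(k)^2 + p(k)): the central ratios of the shifts form
  the orbit of s. Since shifting preserves standardness, the theorem reduces to
  existence and uniqueness of a standard solution with prescribed central ratio.

  Uniqueness: the central ratio fixes every p(k); the m-increments d(k) then obey
  d(k+1) = p(k)(2 + p(k)) d(k), so the solution is determined up to a positive
  factor, and the limits 0 and 1 of m fix that factor. Existence: run the same
  recursion along the orbit s_k(x) and normalise; s(t) <= t/8 makes the
  increments decay geometrically in both directions, so all the series converge.
\<close>

section \<open>The map s\<close>

definition ratio_root :: "real \<Rightarrow> real" where
  "ratio_root t = (sqrt (8 * t + 1) - 1) / 4"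

lemma ratio_root_pos: "t > 0 \<Longrightarrow> ratio_root t > 0"
  unfolding ratio_root_def by (simp add: real_less_rsqrt)

lemma ratio_root_eq: "t > 0 \<Longrightarrow> 2 * ratio_root t ^ 2 + ratio_root t = t"
  unfolding ratio_root_def by (simp add: power2_eq_square field_simps)

lemma ratio_poly_inj:
  fixes p q :: real
  assumes "p > 0" "q > 0" "2 * p^2 + p = 2 * q^2 + q"
  shows "p = q"
proof -
  have "(p - q) * (2 * (p + q) + 1) = 0"
    using assms(3) by (simp add: algebra_simps power2_eq_square)
  then show ?thesis using assms by simp
qed

lemma sfun_param: "p > 0 \<Longrightarrow> sfun (2 * p^2 + p) = p^2 / (2 + p)"
proof -
  assume p: "p > 0"
  have "8 * (2 * p^2 + p) + 1 = (4 * p + 1)^2" by (simp add: power2_eq_square algebra_simps)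
  then have "sqrt (8 * (2 * p^2 + p) + 1) = 4 * p + 1" using p by simp
  then show ?thesis unfolding sfun_def Let_def using p by (simp add: power2_eq_square field_simps)
qed

lemma sfun_eq_ratio_root: "t > 0 \<Longrightarrow> sfun t = ratio_root t ^ 2 / (2 + ratio_root t)"
  using sfun_param[of "ratio_root t"] ratio_root_pos ratio_root_eq by auto

lemma sfun_pos: "t > 0 \<Longrightarrow> sfun t > 0"
  using sfun_eq_ratio_root[of t] ratio_root_pos[of t] by simp

lemma sfun_le_eighth: assumes "t > 0" shows "sfun t \<le> t / 8"
proof -
  define p where "p = ratio_root t"
  have p: "p > 0" "t = 2 * p^2 + p" using ratio_root_pos ratio_root_eq assms p_def by auto
  have "2 * p^2 - 3 * p + 2 = 2 * (p - 3/4)^2 + 7/8" by (simp add: power2_eq_square algebra_simps)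
  then have "0 \<le> p * (2 * p^2 - 3 * p + 2)" using p by (simp add: add_pos_nonneg)
  then have "8 * p^2 \<le> (2 * p^2 + p) * (2 + p)" by (simp add: power2_eq_square algebra_simps)
  then have "p^2 / (2 + p) \<le> (2 * p^2 + p) / 8" using p by (simp add: field_simps)
  then show ?thesis using sfun_param[OF p(1)] p(2) by simp
qed

lemma sfun_inj:
  assumes "t > 0" "u > 0" "sfun t = sfun u"
  shows "t = u"
proof -
  define p q where "p = ratio_root t" and "q = ratio_root u"
  have pq: "p > 0" "q > 0" "t = 2 * p^2 + p" "u = 2 * q^2 + q"
    using ratio_root_pos ratio_root_eq assms p_def q_def by auto
  then have "p^2 / (2 + p) = q^2 / (2 + q)" using assms(3) sfun_param by simp
  then have "p^2 * (2 + q) = q^2 * (2 + p)" using pq by (simp add: field_simps)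
  then have "(p - q) * (2 * p + 2 * q + p * q) = 0" by (simp add: algebra_simps power2_eq_square)
  moreover have "2 * p + 2 * q + p * q > 0" using pq by (simp add: add_pos_pos)
  ultimately show ?thesis using pq by simp
qed

lemma sfun_sfun_m1: assumes "t > 0" shows "sfun (sfun_m1 t) = t"
proof -
  define p where "p = ratio_root (1 / t)"
  have p: "p > 0" "1 / t = 2 * p^2 + p" using ratio_root_pos ratio_root_eq assms p_def by auto
  have "sfun_m1 t = 2 * (1 / p)^2 + 1 / p"
    unfolding sfun_m1_def p(2) sfun_param[OF p(1)] using p(1) by (simp add: power2_eq_square field_simps)
  then have "sfun (sfun_m1 t) = (1 / p)^2 / (2 + 1 / p)" using sfun_param[of "1 / p"] p(1) by simp
  also have "\<dots> = 1 / (2 * p^2 + p)" using p(1) by (simp add: power2_eq_square field_simps)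
  finally show ?thesis unfolding p(2)[symmetric] by simp
qed

lemma s_iter_0: "s_iter 0 x = x"
  by (simp add: s_iter_def)

lemma s_iter_pos: "x > 0 \<Longrightarrow> s_iter k x > 0"
proof -
  assume x: "x > 0"
  have "(sfun ^^ n) x > 0" "(sfun_m1 ^^ n) x > 0" for n
    by (induction n) (use x sfun_pos sfun_m1_def in auto)
  then show ?thesis unfolding s_iter_def by auto
qed

lemma s_iter_succ: assumes "x > 0" shows "s_iter (k + 1) x = sfun (s_iter k x)"
proof (cases "k \<ge> 0")
  case True
  then have "nat (k + 1) = Suc (nat k)" by simp
  then show ?thesis unfolding s_iter_def using True by simp
next
  case False
  then have "nat (- k) = Suc (nat (- (k + 1)))" by simp
  then have "s_iter k x = sfun_m1 (s_iter (k + 1) x)"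
    unfolding s_iter_def using False by auto
  then show ?thesis using sfun_sfun_m1 s_iter_pos assms by simp
qed

section \<open>Positive solutions and their central ratios\<close>

lemma three_term_iff_differences:
  fixes a b m\<^sub>0 m\<^sub>1 m\<^sub>2 :: real
  assumes a: "a > 0" and b: "b > 0"
  shows "((a + b) * (m\<^sub>1 + a) = a * m\<^sub>2 + b * m\<^sub>0 \<and> (a + b)^2 = b * (m\<^sub>2 - m\<^sub>0))
    \<longleftrightarrow> (m\<^sub>1 - m\<^sub>0 = a^2 / b \<and> m\<^sub>2 - m\<^sub>1 = 2 * a + b)"
proof
  assume h: "(a + b) * (m\<^sub>1 + a) = a * m\<^sub>2 + b * m\<^sub>0 \<and> (a + b)^2 = b * (m\<^sub>2 - m\<^sub>0)"
  have "(a + b) * (b * (m\<^sub>1 - m\<^sub>0) - a^2)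
      = b * ((a + b) * (m\<^sub>1 + a) - a * m\<^sub>2 - b * m\<^sub>0) + a * (b * (m\<^sub>2 - m\<^sub>0) - (a + b)^2)"
    by (simp add: algebra_simps power2_eq_square)
  then have "b * (m\<^sub>1 - m\<^sub>0) = a^2" using h a b by simp
  then have d1: "m\<^sub>1 - m\<^sub>0 = a^2 / b" using b by (simp add: field_simps)
  have "m\<^sub>2 - m\<^sub>0 = (a + b)^2 / b" using h b by (simp add: field_simps)
  then have "m\<^sub>2 - m\<^sub>1 = ((a + b)^2 - a^2) / b" using d1 by (simp add: diff_divide_distrib)
  also have "\<dots> = 2 * a + b" using b by (simp add: field_simps power2_eq_square)
  finally show "m\<^sub>1 - m\<^sub>0 = a^2 / b \<and> m\<^sub>2 - m\<^sub>1 = 2 * a + b" using d1 by simp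
next
  assume "m\<^sub>1 - m\<^sub>0 = a^2 / b \<and> m\<^sub>2 - m\<^sub>1 = 2 * a + b"
  then have "m\<^sub>0 = m\<^sub>1 - a^2 / b" "m\<^sub>2 = m\<^sub>1 + 2 * a + b" by auto
  then show "(a + b) * (m\<^sub>1 + a) = a * m\<^sub>2 + b * m\<^sub>0 \<and> (a + b)^2 = b * (m\<^sub>2 - m\<^sub>0)"
    using b by (simp add: field_simps power2_eq_square)
qed

lemma abmn_positive_iff_differences:
  "abmn_positive (a, b, m, n) \<longleftrightarrow> (\<forall>i. a i > 0 \<and> b i > 0 \<and>
     m i - m (i - 1) = a i^2 / b i \<and> m (i + 1) - m i = 2 * a i + b i \<and>
     n i - n (i + 1) = b i^2 / a i \<and> n (i - 1) - n i = 2 * b i + a i)"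
proof -
  have pointwise: "(0 \<le> a i \<and> 0 \<le> b i \<and>
        (a i + b i) * (m i + a i) = a i * m (i + 1) + b i * m (i - 1) \<and>
        (a i + b i) * (n i + b i) = a i * n (i + 1) + b i * n (i - 1) \<and>
        (a i + b i)^2 = b i * (m (i + 1) - m (i - 1)) \<and>
        (a i + b i)^2 = a i * (n (i - 1) - n (i + 1))) \<and> (a i > 0 \<and> b i > 0)
    \<longleftrightarrow> a i > 0 \<and> b i > 0 \<and>
        m i - m (i - 1) = a i^2 / b i \<and> m (i + 1) - m i = 2 * a i + b i \<and>
        n i - n (i + 1) = b i^2 / a i \<and> n (i - 1) - n i = 2 * b i + a i" for i
  proof (cases "a i > 0 \<and> b i > 0")
    case True
    then show ?thesis
      using three_term_iff_differences[where a = "a i" and b = "b i" and m\<^sub>0 = "m (i - 1)" and m\<^sub>1 = "m i" and m\<^sub>2 = "m (i + 1)"]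
        three_term_iff_differences[where a = "b i" and b = "a i" and m\<^sub>0 = "n (i + 1)" and m\<^sub>1 = "n i" and m\<^sub>2 = "n (i - 1)"]
      by (simp add: add.commute) blast
  qed auto
  show ?thesis
    unfolding abmn_positive_def abmn_system_def prod.case all_conj_distrib[symmetric] pointwise ..
qed

lemma shiftS_0 [simp]: "shiftS 0 q = q"
  by (cases q) (simp add: shiftS_def)

lemma filterlim_int_add_const_at_top: "filterlim (\<lambda>i::int. i + k) at_top at_top"
  unfolding filterlim_at_top eventually_at_top_linorder
proof
  show "\<exists>N. \<forall>i\<ge>N. Z \<le> i + k" for Z by (rule exI[of _ "Z - k"]) auto
qed

lemma filterlim_int_add_const_at_bot: "filterlim (\<lambda>i::int. i + k) at_bot at_bot"
  unfolding filterlim_at_bot eventually_at_bot_linorder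
proof
  show "\<exists>N. \<forall>i\<le>N. i + k \<le> Z" for Z by (rule exI[of _ "Z - k"]) auto
qed

lemma abmn_standard_shiftS:
  assumes "abmn_standard q" shows "abmn_standard (shiftS k q)"
proof -
  obtain a b m n where q: "q = (a, b, m, n)" by (cases q)
  have idx: "i + 1 + k = i + k + 1" "i - 1 + k = i + k - 1" for i :: int by simp_all
  have "abmn_positive (a, b, m, n)" and lim: "(m \<longlongrightarrow> 0) at_bot" "(n \<longlongrightarrow> 0) at_top" "(m \<longlongrightarrow> 1) at_top"
    using assms unfolding q abmn_standard_def by auto
  then have "abmn_positive (\<lambda>i. a (i + k), \<lambda>i. b (i + k), \<lambda>i. m (i + k), \<lambda>i. n (i + k))"
    unfolding abmn_positive_iff_differences idx by blast
  moreover have "((\<lambda>i. m (i + k)) \<longlongrightarrow> 0) at_bot" "((\<lambda>i. m (i + k)) \<longlongrightarrow> 1) at_top"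
    "((\<lambda>i. n (i + k)) \<longlongrightarrow> 0) at_top"
    using filterlim_compose[OF lim(1) filterlim_int_add_const_at_bot]
      filterlim_compose[OF lim(3) filterlim_int_add_const_at_top]
      filterlim_compose[OF lim(2) filterlim_int_add_const_at_top] by (simp_all add: o_def)
  ultimately show ?thesis unfolding q shiftS_def abmn_standard_def by simp
qed

lemma central_ratio_shiftS:
  "central_ratio (shiftS k (a, b, m, n)) = (n (k - 1) - n k) / (m k - m (k - 1))"
  by (simp add: central_ratio_def shiftS_def add.commute)

lemma central_ratio_shiftS_positive:
  assumes "abmn_positive (a, b, m, n)"
  shows "central_ratio (shiftS k (a, b, m, n)) = 2 * (b k / a k)^2 + b k / a k"
    and "central_ratio (shiftS k (a, b, m, n)) > 0"
proof -
  have pos: "a k > 0" "b k > 0" and d: "m k - m (k - 1) = a k^2 / b k" "n (k - 1) - n k = 2 * b k + a k"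
    using assms unfolding abmn_positive_iff_differences by auto
  have "central_ratio (shiftS k (a, b, m, n)) = (2 * b k + a k) / (a k^2 / b k)"
    unfolding central_ratio_shiftS d ..
  then show "central_ratio (shiftS k (a, b, m, n)) = 2 * (b k / a k)^2 + b k / a k"
    using pos by (simp add: field_simps power2_eq_square)
  with pos show "central_ratio (shiftS k (a, b, m, n)) > 0" by (simp add: add_pos_pos)
qed

lemma central_ratio_shiftS_succ:
  assumes "abmn_positive q"
  shows "central_ratio (shiftS (k + 1) q) = sfun (central_ratio (shiftS k q))"
proof -
  obtain a b m n where q: "q = (a, b, m, n)" by (cases q)
  have pos: "a k > 0" "b k > 0"
    and d: "m (k + 1) - m k = 2 * a k + b k" "n k - n (k + 1) = b k^2 / a k"
    using assms unfolding q abmn_positive_iff_differences by auto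
  have "central_ratio (shiftS (k + 1) q) = (b k^2 / a k) / (2 * a k + b k)"
    unfolding q central_ratio_shiftS using d by simp
  also have "\<dots> = (b k / a k)^2 / (2 + b k / a k)"
    using pos by (simp add: field_simps power2_eq_square)
  also have "\<dots> = sfun (central_ratio (shiftS k q))"
    using pos assms unfolding q central_ratio_shiftS_positive(1)[OF assms[unfolded q]]
    by (simp add: sfun_param)
  finally show ?thesis .
qed

lemma central_ratio_shiftS_orbit:
  assumes "abmn_positive q"
  shows "central_ratio (shiftS k q) = s_iter k (central_ratio q)"
proof -
  obtain a b m n where q: "q = (a, b, m, n)" by (cases q)
  define c where "c k = central_ratio (shiftS k q)" for k
  have c_pos: "c k > 0" for k
    unfolding c_def q using central_ratio_shiftS_positive(2) assms q by simp
  have c_succ: "c (k + 1) = sfun (c k)" for k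
    unfolding c_def using central_ratio_shiftS_succ[OF assms] .
  have "c k = s_iter k (c 0)"
  proof (induction k rule: int_induct[where k = 0])
    case base
    then show ?case by (simp add: s_iter_0)
  next
    case (step1 k)
    then show ?case using c_succ c_pos s_iter_succ by simp
  next
    case (step2 k)
    have "sfun (c (k - 1)) = sfun (s_iter (k - 1) (c 0))"
      using c_succ[of "k - 1"] s_iter_succ[OF c_pos, of "k - 1"] step2.IH by simp
    then show ?case using sfun_inj c_pos s_iter_pos by blast
  qed
  then show ?thesis unfolding c_def by simp
qed

section \<open>Uniqueness of the standard solution\<close>

lemma int_shift_invariant:
  fixes f :: "int \<Rightarrow> 'a"
  assumes "\<And>i. f (i + 1) = f i"
  shows "f i = f j"
proof -
  have "f i = f 0" for i
  proof (induction i rule: int_induct[where k = 0])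
    case (step2 i)
    then show ?case using assms[of "i - 1"] by simp
  qed (use assms in simp_all)
  then show ?thesis by metis
qed

lemma int_shift_invariant_tendsto:
  fixes f :: "int \<Rightarrow> 'a::t2_space"
  assumes "\<And>i. f (i + 1) = f i" and "(f \<longlongrightarrow> L) F" and "F \<noteq> bot"
  shows "f i = L"
proof -
  have "f = (\<lambda>_. f i)" using int_shift_invariant[of f, OF assms(1)] by blast
  then have "((\<lambda>_. f i) \<longlongrightarrow> L) F" using assms(2) by simp
  then show ?thesis using tendsto_unique[OF assms(3) tendsto_const] by blast
qed

lemma abmn_positive_proportional:
  assumes P: "abmn_positive (a, b, m, n)" and P': "abmn_positive (a', b', m', n')"
    and R: "central_ratio (a, b, m, n) = central_ratio (a', b', m', n')"
  obtains l where "\<And>i. a i = l * a' i" "\<And>i. b i = l * b' i"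
proof -
  note F = P[unfolded abmn_positive_iff_differences, rule_format]
  note F' = P'[unfolded abmn_positive_iff_differences, rule_format]
  define p where "p i = b i / a i" for i
  define d where "d i = m i - m (i - 1)" for i
  define d' where "d' i = m' i - m' (i - 1)" for i
  have p_pos: "p i > 0" for i unfolding p_def using F by simp
  have ratio: "b' i / a' i = p i" for i
  proof -
    have "2 * (b i / a i)^2 + b i / a i = 2 * (b' i / a' i)^2 + b' i / a' i"
      using central_ratio_shiftS_positive(1)[OF P, of i] central_ratio_shiftS_positive(1)[OF P', of i]
        central_ratio_shiftS_orbit[OF P, of i] central_ratio_shiftS_orbit[OF P', of i] R by simp
    then show ?thesis unfolding p_def using ratio_poly_inj F F' by (metis divide_pos_pos)
  qed
  have a_eq: "a i = p i * d i" for i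
    unfolding d_def p_def using F[of i] by (simp add: power2_eq_square)
  have a'_eq: "a' i = p i * d' i" for i
    unfolding d'_def ratio[of i, symmetric] using F'[of i] by (simp add: power2_eq_square)
  have d_succ: "d (i + 1) = p i * (2 + p i) * d i" for i
    unfolding d_def p_def using F[of i] by (simp add: field_simps power2_eq_square)
  have d'_succ: "d' (i + 1) = p i * (2 + p i) * d' i" for i
    unfolding d'_def ratio[of i, symmetric] using F'[of i] by (simp add: field_simps power2_eq_square)
  have d'_pos: "d' i > 0" for i unfolding d'_def using F'[of i] by simp
  have "d i / d' i = d 0 / d' 0" for i
  proof (rule int_shift_invariant)
    show "d (i + 1) / d' (i + 1) = d i / d' i" for i
      unfolding d_succ d'_succ using p_pos[of i] by (simp add: add_pos_pos)
  qed
  then have d_eq: "d i = d 0 / d' 0 * d' i" for i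
    using d'_pos[of i] by (simp add: divide_eq_eq)
  show ?thesis
  proof (rule that)
    show a_prop: "a i = d 0 / d' 0 * a' i" for i
      unfolding a_eq a'_eq d_eq[of i] by simp
    have "b i = p i * a i" for i unfolding p_def using F[of i] by simp
    moreover have "b' i = p i * a' i" for i unfolding ratio[of i, symmetric] using F'[of i] by simp
    ultimately show "b i = d 0 / d' 0 * b' i" for i using a_prop by simp
  qed
qed

lemma abmn_standard_unique:
  assumes S: "abmn_standard q" and S': "abmn_standard q'"
    and R: "central_ratio q = central_ratio q'"
  shows "q = q'"
proof -
  obtain a b m n a' b' m' n' where q: "q = (a, b, m, n)" and q': "q' = (a', b', m', n')"
    by (cases q, cases q')
  have P: "abmn_positive (a, b, m, n)" and P': "abmn_positive (a', b', m', n')"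
    and lim: "(m \<longlongrightarrow> 0) at_bot" "(m \<longlongrightarrow> 1) at_top" "(n \<longlongrightarrow> 0) at_top"
    and lim': "(m' \<longlongrightarrow> 0) at_bot" "(m' \<longlongrightarrow> 1) at_top" "(n' \<longlongrightarrow> 0) at_top"
    using S S' unfolding q q' abmn_standard_def by auto
  note F = P[unfolded abmn_positive_iff_differences, rule_format]
  note F' = P'[unfolded abmn_positive_iff_differences, rule_format]
  obtain l where a: "\<And>i. a i = l * a' i" and b: "\<And>i. b i = l * b' i"
    using abmn_positive_proportional[OF P P'] R unfolding q q' by blast
  have m_succ: "m (i + 1) - l * m' (i + 1) = m i - l * m' i" for i
    using F[of i] F'[of i] a[of i] b[of i] by (simp add: algebra_simps)
  have lim_bot: "((\<lambda>i. m i - l * m' i) \<longlongrightarrow> 0 - l * 0) at_bot"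
    and lim_top: "((\<lambda>i. m i - l * m' i) \<longlongrightarrow> 1 - l * 1) at_top"
    by (intro tendsto_intros lim lim')+
  have "m i - l * m' i = 0 - l * 0" "m i - l * m' i = 1 - l * 1" for i
    using int_shift_invariant_tendsto[of "\<lambda>i. m i - l * m' i", OF m_succ lim_bot]
      int_shift_invariant_tendsto[of "\<lambda>i. m i - l * m' i", OF m_succ lim_top] by simp_all
  then have l: "l = 1" and m: "m = m'" by auto
  have n_succ: "n (i + 1) - n' (i + 1) = n i - n' i" for i
    using F[of i] F'[of i] a[of i] b[of i] l by (simp add: algebra_simps)
  have "((\<lambda>i. n i - n' i) \<longlongrightarrow> 0 - 0) at_top"
    by (intro tendsto_intros lim lim')
  from int_shift_invariant_tendsto[of "\<lambda>i. n i - n' i", OF n_succ this]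
  have "n = n'" by auto
  with a b l m show ?thesis unfolding q q' by auto
qed

lemma abmn_st_eqI:
  assumes "abmn_standard q" shows "abmn_st (central_ratio q) = q"
  unfolding abmn_st_def using assms abmn_standard_unique by blast

section \<open>Existence of the standard solution\<close>

lemma abmn_positive_of_increments:
  fixes p d m n :: "int \<Rightarrow> real"
  assumes p: "\<And>i. p i > 0" and d: "\<And>i. d i > 0"
    and d_succ: "\<And>i. d (i + 1) = p i * (2 + p i) * d i"
    and p_succ: "\<And>i. 2 * p (i + 1)^2 + p (i + 1) = p i^2 / (2 + p i)"
    and m: "\<And>i. m i - m (i - 1) = d i"
    and n: "\<And>i. n (i - 1) - n i = (2 * p i^2 + p i) * d i"
  shows "abmn_positive (\<lambda>i. p i * d i, \<lambda>i. p i^2 * d i, m, n)"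
  unfolding abmn_positive_iff_differences
proof (intro allI conjI)
  fix i
  have pd: "p i > 0" "d i > 0" "2 + p i > 0" using p[of i] d[of i] by auto
  show "p i * d i > 0" "p i^2 * d i > 0" using pd by simp_all
  show "m i - m (i - 1) = (p i * d i)^2 / (p i^2 * d i)"
    using m[of i] pd by (simp add: power2_eq_square)
  show "m (i + 1) - m i = 2 * (p i * d i) + p i^2 * d i"
    using m[of "i + 1"] d_succ[of i] by (simp add: algebra_simps power2_eq_square)
  have "n i - n (i + 1) = p i^2 / (2 + p i) * (p i * (2 + p i) * d i)"
    using n[of "i + 1"] p_succ[of i] d_succ[of i] by simp
  also have "\<dots> = p i^3 * d i"
    using pd(3) by (simp add: power2_eq_square power3_eq_cube)
  also have "\<dots> = (p i^2 * d i)^2 / (p i * d i)"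
    using pd by (simp add: power2_eq_square power3_eq_cube)
  finally show "n i - n (i + 1) = (p i^2 * d i)^2 / (p i * d i)" .
  show "n (i - 1) - n i = 2 * (p i^2 * d i) + p i * d i"
    using n[of i] by (simp add: algebra_simps)
qed

definition int_psum :: "(int \<Rightarrow> real) \<Rightarrow> int \<Rightarrow> real" where
  "int_psum w i = (if 0 \<le> i then (\<Sum>n<nat i. w (int n + 1)) else - (\<Sum>n<nat (- i). w (- int n)))"

lemma int_psum_diff: "int_psum w i - int_psum w (i - 1) = w i"
proof -
  consider "i \<ge> 1" | "i = 0" | "i < 0" by linarith
  then show ?thesis
  proof cases
    case 1
    then have "nat i = Suc (nat (i - 1))" by simp
    then show ?thesis unfolding int_psum_def using 1 by simp
  next
    case 3
    then have "nat (- (i - 1)) = Suc (nat (- i))" by simp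
    then show ?thesis unfolding int_psum_def using 3 by simp
  qed (simp add: int_psum_def)
qed

lemma int_psum_tendsto_at_top:
  assumes "summable (\<lambda>n. w (int n + 1))"
  shows "(int_psum w \<longlongrightarrow> (\<Sum>n. w (int n + 1))) at_top"
proof -
  have "((\<lambda>i. \<Sum>n<nat i. w (int n + 1)) \<longlongrightarrow> (\<Sum>n. w (int n + 1))) at_top"
    using filterlim_compose[OF summable_LIMSEQ[OF assms] filterlim_nat_sequentially] by (simp add: o_def)
  moreover have "eventually (\<lambda>i. (\<Sum>n<nat i. w (int n + 1)) = int_psum w i) at_top"
    using eventually_ge_at_top[of "0::int"] by eventually_elim (simp add: int_psum_def)
  ultimately show ?thesis by (rule Lim_transform_eventually)
qed

lemma filterlim_nat_uminus_at_bot: "filterlim (\<lambda>i::int. nat (- i)) sequentially at_bot"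
  unfolding filterlim_at_top eventually_at_bot_linorder
proof
  show "\<exists>N. \<forall>i\<le>N. Z \<le> nat (- i)" for Z by (rule exI[of _ "- int Z"]) auto
qed

lemma int_psum_tendsto_at_bot:
  assumes "summable (\<lambda>n. w (- int n))"
  shows "(int_psum w \<longlongrightarrow> - (\<Sum>n. w (- int n))) at_bot"
proof -
  have "((\<lambda>i. - (\<Sum>n<nat (- i). w (- int n))) \<longlongrightarrow> - (\<Sum>n. w (- int n))) at_bot"
    using filterlim_compose[OF tendsto_minus[OF summable_LIMSEQ[OF assms]] filterlim_nat_uminus_at_bot]
    by (simp add: o_def)
  moreover have "eventually (\<lambda>i. - (\<Sum>n<nat (- i). w (- int n)) = int_psum w i) at_bot"
    using eventually_le_at_bot[of "0::int"] by eventually_elim (auto simp add: int_psum_def)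
  ultimately show ?thesis by (rule Lim_transform_eventually)
qed

locale abmn_construction =
  fixes x :: real
  assumes x_pos: "x > 0"
begin

text \<open>
  ratio i, root i and incr i become the central ratio of the i-th shift, b(i)/a(i) and
  mass * (m(i) - m(i-1)) of the solution constructed below.
\<close>

definition ratio :: "int \<Rightarrow> real" where
  "ratio i = s_iter i x"

definition root :: "int \<Rightarrow> real" where
  "root i = ratio_root (ratio i)"

definition growth :: "int \<Rightarrow> real" where
  "growth i = root i * (2 + root i)"

definition incr :: "int \<Rightarrow> real" where
  "incr i = (if 0 \<le> i then (\<Prod>k<nat i. growth (int k)) else (\<Prod>k<nat (- i). 1 / growth (- int k - 1)))"

lemma ratio_pos: "ratio i > 0"
  unfolding ratio_def using s_iter_pos x_pos by simp

lemma ratio_succ: "ratio (i + 1) = sfun (ratio i)"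
  unfolding ratio_def using s_iter_succ x_pos by simp

lemma root_pos: "root i > 0"
  unfolding root_def using ratio_root_pos ratio_pos by simp

lemma ratio_eq_root: "ratio i = 2 * root i^2 + root i"
  unfolding root_def using ratio_root_eq ratio_pos by simp

lemma ratio_succ_eq_root: "ratio (i + 1) = root i^2 / (2 + root i)"
  unfolding ratio_succ root_def using sfun_eq_ratio_root ratio_pos by simp

lemma growth_pos: "growth i > 0"
  unfolding growth_def using root_pos[of i] by simp

lemma growth_le: "growth i \<le> ratio i * (2 + ratio i)"
proof -
  have "root i \<le> ratio i" using ratio_eq_root[of i] root_pos[of i] by simp
  then show ?thesis unfolding growth_def using root_pos[of i] by (intro mult_mono) auto
qed

lemma growth_ge: "ratio i / 2 \<le> growth i"
  unfolding growth_def ratio_eq_root using root_pos[of i] by (simp add: power2_eq_square algebra_simps)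

lemma incr_pos: "incr i > 0"
  unfolding incr_def using growth_pos by (auto intro!: prod_pos)

lemma incr_succ: "incr (i + 1) = growth i * incr i"
proof -
  consider "i \<ge> 0" | "i = -1" | "i < -1" by linarith
  then show ?thesis
  proof cases
    case 1
    then have "nat (i + 1) = Suc (nat i)" by simp
    then show ?thesis unfolding incr_def using 1 by simp
  next
    case 2
    then show ?thesis unfolding incr_def using growth_pos[of "-1"] by simp
  next
    case 3
    then have "nat (- i) = Suc (nat (- (i + 1)))" by simp
    then have "incr i = incr (i + 1) / growth i" unfolding incr_def using 3 by simp
    then show ?thesis using growth_pos[of i] by simp
  qed
qed

lemma ratio_le_nat: "ratio (int n) \<le> x / 8^n"
proof (induction n)
  case 0
  then show ?case unfolding ratio_def by (simp add: s_iter_0)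
next
  case (Suc n)
  have "ratio (int (Suc n)) \<le> ratio (int n) / 8"
    using ratio_succ[of "int n"] sfun_le_eighth[OF ratio_pos] by (simp add: add.commute)
  also have "\<dots> \<le> x / 8^n / 8" using Suc by (simp add: divide_right_mono)
  finally show ?case by simp
qed

lemma ratio_ge_neg_nat: "8^n * x \<le> ratio (- int n)"
proof (induction n)
  case 0
  then show ?case unfolding ratio_def by (simp add: s_iter_0)
next
  case (Suc n)
  have "ratio (- int n) \<le> ratio (- int (Suc n)) / 8"
    using ratio_succ[of "- int (Suc n)"] sfun_le_eighth[OF ratio_pos] by simp
  with Suc show ?case by simp
qed


lemma growth_eventually_le_half: "\<exists>N. \<forall>n\<ge>N. growth (int n) \<le> 1/2"
proof -
  obtain N where N: "8 * x < 8^N" using real_arch_pow[of 8 "8 * x"] by auto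
  have "growth (int n) \<le> 1/2" if n: "n \<ge> N" for n
  proof -
    have "(8::real)^N \<le> 8^n" using n by (intro power_increasing) auto
    then have "x / 8^n \<le> x / 8^N" using x_pos by (intro divide_left_mono) auto
    also have "\<dots> < 1/8" using N by (simp add: field_simps)
    finally have r: "ratio (int n) < 1/8" using ratio_le_nat[of n] by linarith
    have "growth (int n) \<le> ratio (int n) * (2 + ratio (int n))" by (rule growth_le)
    also have "\<dots> \<le> 1/8 * (2 + 1/8)" using r ratio_pos[of "int n"] by (intro mult_mono) auto
    finally show ?thesis by simp
  qed
  then show ?thesis by blast
qed

lemma growth_eventually_ge_two: "\<exists>N. \<forall>n\<ge>N. 2 \<le> growth (- int n)"
proof -
  obtain N where N: "4 / x < 8^N" using real_arch_pow[of 8 "4 / x"] by auto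
  have "2 \<le> growth (- int n)" if n: "n \<ge> N" for n
  proof -
    have "(8::real)^N \<le> 8^n" using n by (intro power_increasing) auto
    then have "8^N * x \<le> 8^n * x" using x_pos by simp
    moreover have "4 < 8^N * x" using N x_pos by (simp add: field_simps)
    ultimately have "4 < ratio (- int n)" using ratio_ge_neg_nat[of n] by simp
    then show ?thesis using growth_ge[of "- int n"] by simp
  qed
  then show ?thesis by blast
qed

lemma summable_incr_at_top: "summable (\<lambda>n. incr (int n + 1))"
proof -
  obtain N where N: "\<And>n. n \<ge> N \<Longrightarrow> growth (int n) \<le> 1/2"
    using growth_eventually_le_half by blast
  show ?thesis
  proof (rule summable_ratio_test[of "1/2" N])
    fix n assume "n \<ge> N"
    then have "growth (int n + 1) \<le> 1/2" using N[of "Suc n"] by (simp add: add.commute)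
    moreover have "incr (int (Suc n) + 1) = growth (int n + 1) * incr (int n + 1)"
      using incr_succ[of "int n + 1"] by (simp add: add.commute)
    ultimately show "norm (incr (int (Suc n) + 1)) \<le> 1/2 * norm (incr (int n + 1))"
      using incr_pos[of "int n + 1"] incr_pos[of "int (Suc n) + 1"] by (simp add: mult_right_mono)
  qed simp
qed

lemma summable_incr_at_bot: "summable (\<lambda>n. incr (- int n))"
proof -
  obtain N where N: "\<And>n. n \<ge> N \<Longrightarrow> 2 \<le> growth (- int n)"
    using growth_eventually_ge_two by blast
  show ?thesis
  proof (rule summable_ratio_test[of "1/2" N])
    fix n assume "n \<ge> N"
    then have "2 \<le> growth (- int (Suc n))" using N[of "Suc n"] by simp
    moreover have "incr (- int n) = growth (- int (Suc n)) * incr (- int (Suc n))"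
      using incr_succ[of "- int (Suc n)"] by simp
    ultimately show "norm (incr (- int (Suc n))) \<le> 1/2 * norm (incr (- int n))"
      using incr_pos[of "- int n"] incr_pos[of "- int (Suc n)"] by (simp add: mult_right_mono)
  qed simp
qed

lemma summable_ratio_incr_at_top: "summable (\<lambda>n. ratio (int n + 1) * incr (int n + 1))"
proof (rule summable_comparison_test[OF _ summable_mult[OF summable_incr_at_top, of x]])
  have "ratio (int n + 1) \<le> x" for n
  proof -
    have "(1::real) \<le> 8^Suc n" by (rule one_le_power) simp
    then have "x / 8^Suc n \<le> x" using x_pos by (simp add: divide_le_eq)
    then show ?thesis using ratio_le_nat[of "Suc n"] by (simp add: add.commute)
  qed
  then have "norm (ratio (int n + 1) * incr (int n + 1)) \<le> x * incr (int n + 1)" for n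
    using incr_pos[of "int n + 1"] ratio_pos[of "int n + 1"] by (simp add: mult_right_mono)
  then show "\<exists>N. \<forall>n\<ge>N. norm (ratio (int n + 1) * incr (int n + 1)) \<le> x * incr (int n + 1)"
    by blast
qed


definition mass :: real where
  "mass = (\<Sum>n. incr (- int n)) + (\<Sum>n. incr (int n + 1))"

definition solution :: abmn where
  "solution = (\<lambda>i. root i * incr i / mass, \<lambda>i. root i^2 * incr i / mass,
     \<lambda>i. (int_psum incr i + (\<Sum>n. incr (- int n))) / mass,
     \<lambda>i. ((\<Sum>n. ratio (int n + 1) * incr (int n + 1)) - int_psum (\<lambda>j. ratio j * incr j) i) / mass)"

lemma mass_pos: "mass > 0"
proof -
  have "(\<Sum>n. incr (- int n)) > 0"
    using summable_incr_at_bot incr_pos by (intro suminf_pos) auto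
  moreover have "(\<Sum>n. incr (int n + 1)) \<ge> 0"
    using summable_incr_at_top incr_pos by (intro suminf_nonneg) (auto intro: less_imp_le)
  ultimately show ?thesis unfolding mass_def by simp
qed

lemma solution_positive: "abmn_positive solution"
proof -
  have "abmn_positive (\<lambda>i. root i * (incr i / mass), \<lambda>i. root i^2 * (incr i / mass),
     \<lambda>i. (int_psum incr i + (\<Sum>n. incr (- int n))) / mass,
     \<lambda>i. ((\<Sum>n. ratio (int n + 1) * incr (int n + 1)) - int_psum (\<lambda>j. ratio j * incr j) i) / mass)"
  proof (rule abmn_positive_of_increments)
    show "root i > 0" "incr i / mass > 0" for i using root_pos incr_pos mass_pos by simp_all
    show "incr (i + 1) / mass = root i * (2 + root i) * (incr i / mass)" for i
      using incr_succ growth_def by simp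
    show "2 * root (i + 1)^2 + root (i + 1) = root i^2 / (2 + root i)" for i
      using ratio_eq_root ratio_succ_eq_root by metis
    show "(int_psum incr i + (\<Sum>n. incr (- int n))) / mass
        - (int_psum incr (i - 1) + (\<Sum>n. incr (- int n))) / mass = incr i / mass" for i
      using int_psum_diff[of incr i] by (simp add: diff_divide_distrib[symmetric])
    show "((\<Sum>n. ratio (int n + 1) * incr (int n + 1)) - int_psum (\<lambda>j. ratio j * incr j) (i - 1)) / mass
        - ((\<Sum>n. ratio (int n + 1) * incr (int n + 1)) - int_psum (\<lambda>j. ratio j * incr j) i) / mass
        = (2 * root i^2 + root i) * (incr i / mass)" for i
      using int_psum_diff[of "\<lambda>j. ratio j * incr j" i] ratio_eq_root[of i]
      by (simp add: diff_divide_distrib[symmetric])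
  qed
  then show ?thesis unfolding solution_def by simp
qed

lemma solution_standard: "abmn_standard solution"
proof -
  have "((\<lambda>i. (int_psum incr i + (\<Sum>n. incr (- int n))) / mass)
      \<longlongrightarrow> (- (\<Sum>n. incr (- int n)) + (\<Sum>n. incr (- int n))) / mass) at_bot"
    by (intro tendsto_intros int_psum_tendsto_at_bot summable_incr_at_bot) (use mass_pos in simp)
  moreover have "((\<lambda>i. (int_psum incr i + (\<Sum>n. incr (- int n))) / mass)
      \<longlongrightarrow> ((\<Sum>n. incr (int n + 1)) + (\<Sum>n. incr (- int n))) / mass) at_top"
    by (intro tendsto_intros int_psum_tendsto_at_top summable_incr_at_top) (use mass_pos in simp)
  moreover have "((\<lambda>i. ((\<Sum>n. ratio (int n + 1) * incr (int n + 1)) - int_psum (\<lambda>j. ratio j * incr j) i) / mass)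
      \<longlongrightarrow> ((\<Sum>n. ratio (int n + 1) * incr (int n + 1)) - (\<Sum>n. ratio (int n + 1) * incr (int n + 1))) / mass) at_top"
    by (intro tendsto_intros int_psum_tendsto_at_top summable_ratio_incr_at_top) (use mass_pos in simp)
  ultimately show ?thesis
    using solution_positive mass_pos unfolding abmn_standard_def solution_def mass_def
    by (simp add: add.commute)
qed

lemma solution_central_ratio: "central_ratio solution = x"
proof -
  have "central_ratio solution = 2 * root 0^2 + root 0"
    using central_ratio_shiftS_positive(1)[of _ _ _ _ 0] solution_positive mass_pos root_pos[of 0] incr_pos[of 0]
    unfolding solution_def by (simp add: power2_eq_square)
  then show ?thesis using ratio_eq_root[of 0] by (simp add: ratio_def s_iter_0)
qed

end

lemma abmn_standard_exists: "x > 0 \<Longrightarrow> \<exists>q. abmn_standard q \<and> central_ratio q = x"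
  using abmn_construction.solution_standard abmn_construction.solution_central_ratio
  unfolding abmn_construction_def by blast

theorem mainTheorem16:
  fixes x :: real and k :: int
  assumes "x > 0"
  shows "shiftS k (abmn_st x) = abmn_st (s_iter k x)"
proof -
  obtain q where q: "abmn_standard q" and x: "central_ratio q = x"
    using abmn_standard_exists[OF assms] by blast
  have "central_ratio (shiftS k q) = s_iter k x"
    using central_ratio_shiftS_orbit q x unfolding abmn_standard_def by blast
  then have "abmn_st (s_iter k x) = shiftS k q"
    using abmn_st_eqI[OF abmn_standard_shiftS[OF q, of k]] by simp
  moreover have "abmn_st x = q" using abmn_st_eqI[OF q] x by simp
  ultimately show ?thesis by simp
qed

end
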